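(* Let $\Gamma$ be a Veldkamp $n$-gon ($n\ge2$) and let $(x_0,x_1,\dots,x_n)$ and $(y_0,y_1,\dots,y_n)$ be two roots with $x_0=y_0$ and $x_n=y_n$. Then $x_1$ and $y_1$ are opposite at $x_0$ (i.e. $x_1\equiv_{x_0}y_1$) if and only if $x_{n-1}$ and $y_{n-1}$ are opposite at $x_n$.
   Context: A graph is a pair $(V,E)$ with $E$ a set of $2$-element subsets of $V$; $\Gamma_v$ is the set of neighbors of $v$. An $s$-path is a sequence $(x_0,\dots,x_s)$ of vertices with consecutive vertices adjacent and $x_{i-2}\ne x_i$ for $i\in[2,s]$. A closed $s$-path is an $s$-path with $s\ge 3$ whose first and last vertices coincide; an $s$-circuit is the subgraph determined by a closed $s$-path. An opposition relation on a set $X$ is a symmetric anti-reflexive relation; it is $k$-plump if for every $S\subseteq X$ with $|S|\le k$ some element of $X$ is opposite all elements of $S$. A Veldkamp graph is a graph with a $2$-plump opposition relation $\equiv_v$ on $\Gamma_v$ for each vertex $v$. A path $(v_0,\dots,v_s)$ is straight if $v_{i-1}\equiv_{v_i}v_{i+1}$ for all $i\in[1,s-1]$; a circuit is straight if every path in it is straight. A Veldkamp $n$-gon ($n\ge2$) is a Veldkamp graph satisfying (VP1) connected and bipartite; (VP2) for each $k\in[1,n-1]$ each straight $k$-path is the unique straight path between its endpoints of length at most $k$; (VP3) every straight $(n+1)$-path lies in a straight $2n$-circuit. A root is a straight $n$-path. *)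

theory Defs
  imports Main
begin

text \<open>A graph is given by a vertex set V and an adjacency relation adj
 (edges are the 2-element sets {x,y} with adj x y). opp v x y means x and y
 are opposite at v.\<close>

definition graph :: "'a set \<Rightarrow> ('a \<Rightarrow> 'a \<Rightarrow> bool) \<Rightarrow> bool" where
  "graph V adj \<longleftrightarrow> (\<forall>x y. adj x y \<longrightarrow> x \<in> V \<and> y \<in> V \<and> x \<noteq> y \<and> adj y x)"

definition nbrs :: "('a \<Rightarrow> 'a \<Rightarrow> bool) \<Rightarrow> 'a \<Rightarrow> 'a set" where
  "nbrs adj v = {w. adj v w}"

definition opposition_rel :: "'b set \<Rightarrow> ('b \<Rightarrow> 'b \<Rightarrow> bool) \<Rightarrow> bool" where
  "opposition_rel X R \<longleftrightarrow> (\<forall>x y. R x y \<longrightarrow> x \<in> X \<and> y \<in> X) \<and>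
     (\<forall>x y. R x y \<longrightarrow> R y x) \<and> (\<forall>x. \<not> R x x)"

definition plump :: "nat \<Rightarrow> 'b set \<Rightarrow> ('b \<Rightarrow> 'b \<Rightarrow> bool) \<Rightarrow> bool" where
  "plump k X R \<longleftrightarrow> (\<forall>S. S \<subseteq> X \<and> finite S \<and> card S \<le> k \<longrightarrow> (\<exists>z\<in>X. \<forall>s\<in>S. R z s))"

definition veldkamp_graph :: "'a set \<Rightarrow> ('a \<Rightarrow> 'a \<Rightarrow> bool) \<Rightarrow> ('a \<Rightarrow> 'a \<Rightarrow> 'a \<Rightarrow> bool) \<Rightarrow> bool" where
  "veldkamp_graph V adj opp \<longleftrightarrow> graph V adj \<and>
     (\<forall>v\<in>V. opposition_rel (nbrs adj v) (opp v) \<and> plump 2 (nbrs adj v) (opp v))"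

definition is_path :: "'a set \<Rightarrow> ('a \<Rightarrow> 'a \<Rightarrow> bool) \<Rightarrow> 'a list \<Rightarrow> bool" where
  "is_path V adj p \<longleftrightarrow> p \<noteq> [] \<and> set p \<subseteq> V \<and>
     (\<forall>i. Suc i < length p \<longrightarrow> adj (p ! i) (p ! Suc i)) \<and>
     (\<forall>i. i + 2 < length p \<longrightarrow> p ! i \<noteq> p ! (i + 2))"

definition s_path :: "'a set \<Rightarrow> ('a \<Rightarrow> 'a \<Rightarrow> bool) \<Rightarrow> nat \<Rightarrow> 'a list \<Rightarrow> bool" where
  "s_path V adj s p \<longleftrightarrow> is_path V adj p \<and> length p = s + 1"

definition closed_s_path :: "'a set \<Rightarrow> ('a \<Rightarrow> 'a \<Rightarrow> bool) \<Rightarrow> nat \<Rightarrow> 'a list \<Rightarrow> bool" where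
  "closed_s_path V adj s p \<longleftrightarrow> s_path V adj s p \<and> s \<ge> 3 \<and> hd p = last p"

definition straight :: "('a \<Rightarrow> 'a \<Rightarrow> 'a \<Rightarrow> bool) \<Rightarrow> 'a list \<Rightarrow> bool" where
  "straight opp p \<longleftrightarrow> (\<forall>i. 0 < i \<and> i + 1 < length p \<longrightarrow> opp (p ! i) (p ! (i - 1)) (p ! (i + 1)))"

text \<open>The subgraph (circuit) determined by a closed path c: vertex set set c,
 adjacency circ_adj c.\<close>
definition circ_adj :: "'a list \<Rightarrow> 'a \<Rightarrow> 'a \<Rightarrow> bool" where
  "circ_adj c x y \<longleftrightarrow> (\<exists>i. Suc i < length c \<and> {x, y} = {c ! i, c ! Suc i})"

definition straight_circuit :: "('a \<Rightarrow> 'a \<Rightarrow> 'a \<Rightarrow> bool) \<Rightarrow> 'a list \<Rightarrow> bool" where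
  "straight_circuit opp c \<longleftrightarrow> (\<forall>p. is_path (set c) (circ_adj c) p \<longrightarrow> straight opp p)"

definition lies_in :: "'a list \<Rightarrow> 'a list \<Rightarrow> bool" where
  "lies_in p c \<longleftrightarrow> set p \<subseteq> set c \<and> (\<forall>i. Suc i < length p \<longrightarrow> circ_adj c (p ! i) (p ! Suc i))"

definition veldkamp_ngon :: "'a set \<Rightarrow> ('a \<Rightarrow> 'a \<Rightarrow> bool) \<Rightarrow> ('a \<Rightarrow> 'a \<Rightarrow> 'a \<Rightarrow> bool) \<Rightarrow> nat \<Rightarrow> bool" where
  "veldkamp_ngon V adj opp n \<longleftrightarrow> n \<ge> 2 \<and> veldkamp_graph V adj opp \<and>
    \<comment> \<open>VP1\<close>
    (\<forall>x\<in>V. \<forall>y\<in>V. adj\<^sup>*\<^sup>* x y) \<and>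
    (\<exists>A. A \<subseteq> V \<and> (\<forall>x y. adj x y \<longrightarrow> (x \<in> A \<longleftrightarrow> y \<notin> A))) \<and>
    \<comment> \<open>VP2\<close>
    (\<forall>k p q. 1 \<le> k \<and> k \<le> n - 1 \<and> s_path V adj k p \<and> straight opp p \<and>
        is_path V adj q \<and> straight opp q \<and> length q \<le> k + 1 \<and>
        hd q = hd p \<and> last q = last p \<longrightarrow> q = p) \<and>
    \<comment> \<open>VP3\<close>
    (\<forall>p. s_path V adj (n + 1) p \<and> straight opp p \<longrightarrow>
        (\<exists>c. closed_s_path V adj (2 * n) c \<and> straight_circuit opp c \<and> lies_in p c))"

definition root :: "'a set \<Rightarrow> ('a \<Rightarrow> 'a \<Rightarrow> bool) \<Rightarrow> ('a \<Rightarrow> 'a \<Rightarrow> 'a \<Rightarrow> bool) \<Rightarrow> nat \<Rightarrow> 'a list \<Rightarrow> bool" where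
  "root V adj opp n p \<longleftrightarrow> s_path V adj n p \<and> straight opp p"

end

theory Submission
  imports Defs
begin

text \<open>Reversing x and appending y_1 gives the path (x_n, ..., x_0, y_1), which is straight precisely
  because x_1 and y_1 are opposite at x_0. By (VP3) it lies in a straight 2n-circuit. Such a circuit
  is a genuine 2n-cycle, since a straight path returning to its start in fewer than 2n steps would
  split into two different straight paths of length less than n with common endpoints, contradicting
  (VP2). So the circuit continues from y_1 back to x_n in n - 1 steps, and by (VP2) this continuation
  is (y_1, ..., y_n). Hence x_(n-1) and y_(n-1) are the two circuit neighbours of x_n, which are
  opposite because the circuit is straight. The converse follows by reversing both roots.\<close>

lemma is_path_take:
  assumes "is_path V adj w" "0 < k"
  shows "is_path V adj (take k w)"
  using assms unfolding is_path_def
  by (auto simp: nth_take dest: in_set_takeD)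

lemma is_path_drop:
  assumes "is_path V adj w" "k < length w"
  shows "is_path V adj (drop k w)"
proof -
  have "adj (drop k w ! i) (drop k w ! Suc i)" if "Suc i < length (drop k w)" for i
  proof -
    have "adj (w ! (k + i)) (w ! Suc (k + i))"
      using assms(1) that unfolding is_path_def by simp
    then show ?thesis using assms(2) by simp
  qed
  moreover have "drop k w ! i \<noteq> drop k w ! (i + 2)" if "i + 2 < length (drop k w)" for i
  proof -
    have "w ! (k + i) \<noteq> w ! (k + i + 2)"
      using assms(1) that unfolding is_path_def by simp
    then show ?thesis using assms(2) by (simp add: add.assoc)
  qed
  ultimately show ?thesis
    using assms set_drop_subset[of k w] unfolding is_path_def by auto
qed

lemma is_path_rev:
  assumes "is_path V adj w" "\<And>a b. adj a b \<Longrightarrow> adj b a"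
  shows "is_path V adj (rev w)"
proof -
  let ?L = "length w"
  have "adj (rev w ! i) (rev w ! Suc i)" if i: "Suc i < length (rev w)" for i
  proof -
    have "Suc (?L - Suc (Suc i)) < ?L" using i by simp
    then have "adj (w ! (?L - Suc (Suc i))) (w ! Suc (?L - Suc (Suc i)))"
      using assms(1) unfolding is_path_def by blast
    moreover have "Suc (?L - Suc (Suc i)) = ?L - Suc i" using i by simp
    ultimately show ?thesis using i assms(2) by (simp add: rev_nth)
  qed
  moreover have "rev w ! i \<noteq> rev w ! (i + 2)" if i: "i + 2 < length (rev w)" for i
  proof -
    have "(?L - Suc (i + 2)) + 2 < ?L" using i by simp
    then have "w ! (?L - Suc (i + 2)) \<noteq> w ! ((?L - Suc (i + 2)) + 2)"
      using assms(1) unfolding is_path_def by blast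
    moreover have "(?L - Suc (i + 2)) + 2 = ?L - Suc i" using i by simp
    ultimately show ?thesis using i by (simp add: rev_nth)
  qed
  ultimately show ?thesis using assms unfolding is_path_def by auto
qed

lemma is_path_snoc:
  assumes "is_path V adj w" "v \<in> V" "adj (last w) v"
    and "2 \<le> length w" "w ! (length w - 2) \<noteq> v"
  shows "is_path V adj (w @ [v])"
proof -
  have "adj ((w @ [v]) ! i) ((w @ [v]) ! Suc i)" if i: "Suc i < length w + 1" for i
  proof (cases "Suc i < length w")
    case True
    then show ?thesis using assms(1) unfolding is_path_def by (simp add: nth_append)
  next
    case False
    then have "i = length w - 1" using i by simp
    moreover have "w \<noteq> []" using assms(4) by auto
    ultimately show ?thesis using assms(3) by (simp add: nth_append last_conv_nth)
  qed
  moreover have "(w @ [v]) ! i \<noteq> (w @ [v]) ! (i + 2)" if i: "i + 2 < length w + 1" for i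
  proof (cases "i + 2 < length w")
    case True
    then show ?thesis using assms(1) unfolding is_path_def by (simp add: nth_append)
  next
    case False
    then have "length w = i + 2" using i by simp
    then have "(w @ [v]) ! i = w ! (length w - 2)" "(w @ [v]) ! (i + 2) = v"
      by (simp_all add: nth_append)
    then show ?thesis using assms(5) by simp
  qed
  ultimately show ?thesis using assms(1,2) unfolding is_path_def by auto
qed

lemma straight_take:
  assumes "straight opp w" shows "straight opp (take k w)"
  using assms unfolding straight_def by (auto simp: nth_take)

lemma straight_drop:
  assumes "straight opp w" shows "straight opp (drop k w)"
  unfolding straight_def
proof (intro allI impI)
  fix i assume i: "0 < i \<and> i + 1 < length (drop k w)"
  then have "0 < k + i \<and> (k + i) + 1 < length w" by auto
  then have "opp (w ! (k + i)) (w ! (k + i - 1)) (w ! (k + i + 1))"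
    using assms unfolding straight_def by blast
  moreover have "k + i - 1 = k + (i - 1)" "k \<le> length w" using i by auto
  ultimately show "opp (drop k w ! i) (drop k w ! (i - 1)) (drop k w ! (i + 1))"
    using i by (simp add: add.assoc)
qed

lemma straight_rev:
  assumes "straight opp w" "\<And>v a b. v \<in> set w \<Longrightarrow> opp v a b \<Longrightarrow> opp v b a"
  shows "straight opp (rev w)"
  unfolding straight_def
proof (intro allI impI)
  let ?L = "length w"
  fix i assume i: "0 < i \<and> i + 1 < length (rev w)"
  let ?j = "?L - Suc i"
  have "0 < ?j \<and> ?j + 1 < ?L" using i by auto
  then have "opp (w ! ?j) (w ! (?j - 1)) (w ! (?j + 1))"
    using assms(1) unfolding straight_def by blast
  then have "opp (w ! ?j) (w ! (?j + 1)) (w ! (?j - 1))" using assms(2) i by auto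
  moreover have "?j + 1 = ?L - Suc (i - 1)" "?j - 1 = ?L - Suc (i + 1)" using i by auto
  ultimately show "opp (rev w ! i) (rev w ! (i - 1)) (rev w ! (i + 1))"
    using i by (simp add: rev_nth)
qed

lemma straight_snoc:
  assumes "straight opp w" "2 \<le> length w" "opp (last w) (w ! (length w - 2)) v"
  shows "straight opp (w @ [v])"
  unfolding straight_def
proof (intro allI impI)
  fix i assume i: "0 < i \<and> i + 1 < length (w @ [v])"
  show "opp ((w @ [v]) ! i) ((w @ [v]) ! (i - 1)) ((w @ [v]) ! (i + 1))"
  proof (cases "i + 1 < length w")
    case True
    then show ?thesis using assms(1) i unfolding straight_def by (auto simp: nth_append)
  next
    case False
    then have "i = length w - 1" using i by auto
    then show ?thesis using assms(2,3) by (auto simp: nth_append last_conv_nth numeral_2_eq_2)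
  qed
qed

lemma is_path_parity:
  assumes "is_path V adj w" "\<forall>x y. adj x y \<longrightarrow> (x \<in> A \<longleftrightarrow> y \<notin> A)" "i < length w"
  shows "w ! i \<in> A \<longleftrightarrow> (w ! 0 \<in> A \<longleftrightarrow> even i)"
  using assms(3)
proof (induction i)
  case (Suc i)
  then have "adj (w ! i) (w ! Suc i)" using assms(1) unfolding is_path_def by blast
  then show ?case using Suc assms(2) by auto
qed simp

locale veldkamp_polygon =
  fixes V :: "'a set" and adj :: "'a \<Rightarrow> 'a \<Rightarrow> bool" and opp :: "'a \<Rightarrow> 'a \<Rightarrow> 'a \<Rightarrow> bool"
    and n :: nat
  assumes veldkamp_ngon: "veldkamp_ngon V adj opp n"
begin

lemma n_ge_2: "n \<ge> 2"
  using veldkamp_ngon by (simp add: veldkamp_ngon_def)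

lemma adj_sym: "adj a b \<Longrightarrow> adj b a"
  using veldkamp_ngon by (simp add: veldkamp_ngon_def veldkamp_graph_def graph_def)

lemma opp_sym: "v \<in> V \<Longrightarrow> opp v a b \<Longrightarrow> opp v b a"
  using veldkamp_ngon unfolding veldkamp_ngon_def veldkamp_graph_def opposition_rel_def by blast

lemma opp_irrefl: "v \<in> V \<Longrightarrow> \<not> opp v a a"
  using veldkamp_ngon unfolding veldkamp_ngon_def veldkamp_graph_def opposition_rel_def by blast

lemma bipartite: "\<exists>A. \<forall>x y. adj x y \<longrightarrow> (x \<in> A \<longleftrightarrow> y \<notin> A)"
  using veldkamp_ngon unfolding veldkamp_ngon_def by blast

lemma straight_path_unique:
  assumes "1 \<le> k" "k \<le> n - 1" "s_path V adj k p" "straight opp p"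
    and "is_path V adj q" "straight opp q" "length q \<le> k + 1" "hd q = hd p" "last q = last p"
  shows "q = p"
  using veldkamp_ngon assms unfolding veldkamp_ngon_def by blast

lemma straight_path_in_circuit:
  assumes "s_path V adj (n + 1) p" "straight opp p"
  obtains c where "closed_s_path V adj (2 * n) c" "straight_circuit opp c" "lies_in p c"
  using veldkamp_ngon assms unfolding veldkamp_ngon_def by blast

lemma root_rev:
  assumes "root V adj opp n x"
  shows "root V adj opp n (rev x)"
proof -
  have x: "is_path V adj x" "straight opp x"
    using assms by (auto simp: root_def s_path_def)
  have "is_path V adj (rev x)" using is_path_rev[OF x(1)] adj_sym by blast
  moreover have "straight opp (rev x)"
    using straight_rev[OF x(2)] opp_sym x(1) unfolding is_path_def by blast
  ultimately show ?thesis using assms by (simp add: root_def s_path_def)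
qed

lemma straight_path_no_short_return:
  assumes "is_path V adj w" "straight opp w" "length w = m + 1" "1 \<le> m" "m < 2 * n"
  shows "w ! 0 \<noteq> w ! m"
proof
  assume closed: "w ! 0 = w ! m"
  obtain A where A: "\<forall>x y. adj x y \<longrightarrow> (x \<in> A \<longleftrightarrow> y \<notin> A)" using bipartite by blast
  have "even m" using is_path_parity[OF assms(1) A, of m] assms(3) closed by auto
  then obtain a where a: "m = 2 * a" by auto
  have a_bounds: "1 \<le> a" "a \<le> n - 1" using a assms(4,5) by auto
  let ?P = "take (a + 1) w" and ?Q = "rev (drop a w)"
  have P: "s_path V adj a ?P"
    using is_path_take[OF assms(1)] assms(3) a unfolding s_path_def by auto
  have Q: "is_path V adj ?Q"
    using is_path_rev[OF is_path_drop[OF assms(1)]] adj_sym assms(3) a by auto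
  have Q_straight: "straight opp ?Q"
    using straight_rev[OF straight_drop[OF assms(2)]] opp_sym assms(1) set_drop_subset[of a w]
    unfolding is_path_def by blast
  have w_nonempty: "w \<noteq> []" using assms(3) by auto
  then have "hd ?Q = hd ?P"
    using assms(3) a closed by (simp add: hd_rev hd_conv_nth last_conv_nth mult_2)
  moreover have "last ?Q = last ?P"
    using assms(3) a w_nonempty by (simp add: last_rev hd_drop_conv_nth last_conv_nth min_def)
  moreover have "length ?Q \<le> a + 1" using assms(3) a by simp
  ultimately have "?Q = ?P"
    using straight_path_unique[OF a_bounds P straight_take[OF assms(2)] Q Q_straight] by blast
  then have "?Q ! (a - 1) = ?P ! (a - 1)" by simp
  moreover have "?Q ! (a - 1) = w ! (a + 1)"
    using assms(3) a a_bounds by (simp add: rev_nth)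
  ultimately have "w ! (a - 1) = w ! ((a - 1) + 2)"
    using a_bounds by simp
  moreover have "(a - 1) + 2 < length w" using assms(3) a a_bounds by simp
  ultimately show False
    using assms(1) unfolding is_path_def by blast
qed

lemma root_snoc_opposite:
  assumes x: "root V adj opp n x" and y: "root V adj opp n y"
    and start: "x ! 0 = y ! 0" and opposite: "opp (x ! 0) (x ! 1) (y ! 1)"
  shows "s_path V adj (n + 1) (rev x @ [y ! 1])" "straight opp (rev x @ [y ! 1])"
proof -
  have lengths: "length x = n + 1" "length y = n + 1"
    using x y by (simp_all add: root_def s_path_def)
  have rev_x: "is_path V adj (rev x)" "straight opp (rev x)"
    using root_rev[OF x] by (simp_all add: root_def s_path_def)
  have paths: "is_path V adj x" "is_path V adj y"
    using x y by (simp_all add: root_def s_path_def)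
  have ends: "last (rev x) = x ! 0" "rev x ! (length (rev x) - 2) = x ! 1"
    using lengths n_ge_2 hd_conv_nth[of x] length_greater_0_conv[of x]
    by (simp_all add: last_rev rev_nth numeral_2_eq_2)
  have long: "2 \<le> length (rev x)" using lengths n_ge_2 by simp
  have "x ! 0 \<in> V" "y ! 1 \<in> V" "adj (x ! 0) (y ! 1)"
    using paths lengths n_ge_2 start unfolding is_path_def by auto
  moreover have "x ! 1 \<noteq> y ! 1"
    using opposite opp_irrefl[OF \<open>x ! 0 \<in> V\<close>] by metis
  ultimately show "s_path V adj (n + 1) (rev x @ [y ! 1])"
    using is_path_snoc[OF rev_x(1) _ _ long] ends lengths unfolding s_path_def by simp
  show "straight opp (rev x @ [y ! 1])"
    using straight_snoc[OF rev_x(2) long] ends opposite by simp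
qed

end

locale straight_2n_circuit = veldkamp_polygon +
  fixes c :: "'a list"
  assumes closed: "closed_s_path V adj (2 * n) c"
    and straight_circ: "straight_circuit opp c"
begin

definition N :: nat where "N = 2 * n"

definition cyc :: "int \<Rightarrow> 'a" where "cyc i = c ! nat (i mod int N)"

definition cyc_walk :: "int \<Rightarrow> int \<Rightarrow> nat \<Rightarrow> 'a list" where
  "cyc_walk s d m = map (\<lambda>j. cyc (s + d * int j)) [0..<m]"

lemma length_cyc_walk [simp]: "length (cyc_walk s d m) = m"
  by (simp add: cyc_walk_def)

lemma nth_cyc_walk [simp]: "j < m \<Longrightarrow> cyc_walk s d m ! j = cyc (s + d * int j)"
  by (simp add: cyc_walk_def)

lemma N_ge_4: "N \<ge> 4" using n_ge_2 by (simp add: N_def)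

lemma length_c: "length c = N + 1"
  using closed by (simp add: closed_s_path_def s_path_def N_def)

lemma c_path: "is_path V adj c"
  using closed by (simp add: closed_s_path_def s_path_def)

lemma c_last: "c ! N = c ! 0"
proof -
  have "c \<noteq> []" using length_c by auto
  then show ?thesis using closed length_c by (simp add: closed_s_path_def hd_conv_nth last_conv_nth)
qed

lemma circ_adj_sym: "circ_adj c a b \<Longrightarrow> circ_adj c b a"
  unfolding circ_adj_def by (auto simp: insert_commute)

lemma circ_adj_imp_adj: "circ_adj c a b \<Longrightarrow> adj a b"
proof -
  assume "circ_adj c a b"
  then obtain i where i: "Suc i < length c" "{a, b} = {c ! i, c ! Suc i}"
    unfolding circ_adj_def by blast
  have "adj (c ! i) (c ! Suc i)" using c_path i unfolding is_path_def by blast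
  then show ?thesis using i adj_sym by (auto simp: doubleton_eq_iff)
qed

lemma circuit_path_imp_path: "is_path (set c) (circ_adj c) w \<Longrightarrow> is_path V adj w"
  using c_path circ_adj_imp_adj unfolding is_path_def by blast

lemma circuit_path_straight: "is_path (set c) (circ_adj c) w \<Longrightarrow> straight opp w"
  using straight_circ unfolding straight_circuit_def by blast

lemma c_straight: "straight opp c"
proof -
  have "is_path (set c) (circ_adj c) c"
    using c_path length_c unfolding is_path_def circ_adj_def by auto
  then show ?thesis by (rule circuit_path_straight)
qed

lemma c_nth_inj:
  assumes "i < j" "j < N"
  shows "c ! i \<noteq> c ! j"
proof -
  let ?w = "take (j - i + 1) (drop i c)"
  have "is_path V adj ?w"
    using is_path_take[OF is_path_drop[OF c_path]] assms length_c by auto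
  moreover have "straight opp ?w" using straight_take[OF straight_drop[OF c_straight]] .
  moreover have "length ?w = (j - i) + 1" using assms length_c by auto
  ultimately have "?w ! 0 \<noteq> ?w ! (j - i)"
    by (rule straight_path_no_short_return) (use assms in \<open>auto simp: N_def\<close>)
  then show ?thesis using assms length_c by simp
qed

lemma cyc_eq_iff: "cyc i = cyc j \<longleftrightarrow> i mod int N = j mod int N"
proof
  assume eq: "cyc i = cyc j"
  let ?a = "nat (i mod int N)" and ?b = "nat (j mod int N)"
  have "?a < N" "?b < N" using N_ge_4 by (auto simp: nat_less_iff)
  then have "?a = ?b" using eq c_nth_inj unfolding cyc_def by (metis linorder_neqE_nat)
  then show "i mod int N = j mod int N"
    using N_ge_4
    by (metis eq_nat_nat_iff pos_mod_sign of_nat_0_less_iff less_le_trans zero_less_numeral)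
qed (simp add: cyc_def)

lemma cyc_add_multiple: "cyc (i + int N * t) = cyc i"
  by (simp add: cyc_def)

lemma nth_c_eq_cyc: "k \<le> N \<Longrightarrow> c ! k = cyc (int k)"
  using c_last by (cases "k = N") (simp_all add: cyc_def)

lemma cyc_in_c: "cyc i \<in> set c"
proof -
  have "i mod int N < int N" using N_ge_4 by simp
  then have "nat (i mod int N) < length c" using length_c by (simp add: nat_less_iff)
  then show ?thesis unfolding cyc_def by simp
qed

lemma in_c_imp_cyc: "v \<in> set c \<Longrightarrow> \<exists>i. v = cyc i"
  using nth_c_eq_cyc length_c by (metis in_set_conv_nth less_Suc_eq_le Suc_eq_plus1)

lemma circ_adj_cyc: "circ_adj c (cyc i) (cyc (i + 1))"
proof -
  let ?k = "nat (i mod int N)"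
  have k: "?k < N" using N_ge_4 by (simp add: nat_less_iff)
  have "c ! Suc ?k = cyc (int (Suc ?k))" using k nth_c_eq_cyc by simp
  also have "int (Suc ?k) = i mod int N + 1" using N_ge_4 by simp
  also have "cyc (i mod int N + 1) = cyc (i + 1)"
    unfolding cyc_eq_iff by (simp add: mod_add_left_eq)
  finally show ?thesis
    unfolding circ_adj_def using k length_c by (intro exI[of _ ?k]) (simp add: cyc_def)
qed

lemma circ_adj_cyc_cases:
  assumes "circ_adj c (cyc s) b"
  shows "b = cyc (s + 1) \<or> b = cyc (s - 1)"
proof -
  obtain i where i: "Suc i < length c" "{cyc s, b} = {c ! i, c ! Suc i}"
    using assms unfolding circ_adj_def by blast
  have "c ! i = cyc (int i)" "c ! Suc i = cyc (int i + 1)"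
    using i length_c nth_c_eq_cyc[of i] nth_c_eq_cyc[of "Suc i"] by (auto simp: add.commute)
  then have "(cyc s = cyc (int i) \<and> b = cyc (int i + 1)) \<or>
      (cyc s = cyc (int i + 1) \<and> b = cyc (int i))"
    using i by (auto simp: doubleton_eq_iff)
  then show ?thesis
  proof
    assume h: "cyc s = cyc (int i) \<and> b = cyc (int i + 1)"
    then have "s mod int N = int i mod int N" using cyc_eq_iff by blast
    then have "(s + 1) mod int N = (int i + 1) mod int N" by (rule mod_add_cong) simp
    then have "cyc (s + 1) = cyc (int i + 1)" using cyc_eq_iff by blast
    then show ?thesis using h by simp
  next
    assume h: "cyc s = cyc (int i + 1) \<and> b = cyc (int i)"
    then have "s mod int N = (int i + 1) mod int N" using cyc_eq_iff by blast
    then have "(s - 1) mod int N = (int i + 1 - 1) mod int N" by (rule mod_diff_cong) simp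
    then have "cyc (s - 1) = cyc (int i)" using cyc_eq_iff by simp
    then show ?thesis using h by simp
  qed
qed

lemma cyc_neq_add_2:
  assumes "d = 1 \<or> d = -1"
  shows "cyc i \<noteq> cyc (i + 2 * d)"
proof
  assume "cyc i = cyc (i + 2 * d)"
  then have "int N dvd 2 * d" unfolding cyc_eq_iff by (simp add: mod_eq_dvd_iff dvd_minus_iff)
  then have "int N \<le> 2" using assms zdvd_imp_le[of "int N" 2] by auto
  then show False using N_ge_4 by simp
qed

lemma cyc_walk_circuit_path:
  assumes "d = 1 \<or> d = -1" "0 < m"
  shows "is_path (set c) (circ_adj c) (cyc_walk s d m)"
  unfolding is_path_def
proof (intro conjI allI impI)
  show "cyc_walk s d m \<noteq> []" "set (cyc_walk s d m) \<subseteq> set c"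
    using assms cyc_in_c by (auto simp: cyc_walk_def)
  fix i
  assume "Suc i < length (cyc_walk s d m)"
  moreover have "circ_adj c (cyc (s + d * int i)) (cyc (s + d * int i + d))"
    using assms(1)
  proof
    assume "d = -1"
    then show ?thesis using circ_adj_sym[OF circ_adj_cyc[of "s - int i - 1"]] by simp
  qed (simp add: circ_adj_cyc)
  ultimately show "circ_adj c (cyc_walk s d m ! i) (cyc_walk s d m ! Suc i)"
    by (simp add: cyc_walk_def algebra_simps)
next
  fix i
  assume "i + 2 < length (cyc_walk s d m)"
  moreover have "cyc (s + d * int i) \<noteq> cyc (s + d * int i + 2 * d)"
    using cyc_neq_add_2 assms(1) by blast
  ultimately show "cyc_walk s d m ! i \<noteq> cyc_walk s d m ! (i + 2)"
    by (simp add: cyc_walk_def algebra_simps)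
qed

lemma circuit_path_nth_eq_cyc:
  assumes w: "is_path (set c) (circ_adj c) w" and w0: "w ! 0 = cyc s" and w1: "w ! 1 = cyc (s + d)"
    and d: "d = 1 \<or> d = -1"
  shows "j < length w \<Longrightarrow> w ! j = cyc (s + d * int j)"
proof (induction j rule: less_induct)
  case (less j)
  show ?case
  proof (cases "j \<le> 1")
    case True
    then show ?thesis using w0 w1 by (cases j) auto
  next
    case False
    then obtain k where k: "j = k + 2"
      by (metis add.commute le_Suc_ex not_less_eq_eq one_add_one plus_1_eq_Suc)
    have prev: "w ! (k + 1) = cyc (s + d * int k + d)" "w ! k = cyc (s + d * int k)"
      using less.IH[of "k + 1"] less.IH[of k] less.prems k by (simp_all add: algebra_simps)
    have "circ_adj c (w ! (k + 1)) (w ! j)" using w less.prems k unfolding is_path_def by auto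
    then have next_cases:
        "w ! j = cyc (s + d * int k + d + 1) \<or> w ! j = cyc (s + d * int k + d - 1)"
      using circ_adj_cyc_cases prev(1) by simp
    have no_backtrack: "w ! k \<noteq> w ! j" using w less.prems k unfolding is_path_def by auto
    show ?thesis using d
    proof
      assume "d = 1"
      then have "s + d * int k + d - 1 = s + d * int k" "s + d * int k + d + 1 = s + d * int j"
        using k by simp_all
      then show ?thesis using next_cases no_backtrack prev(2) by metis
    next
      assume "d = -1"
      then have "s + d * int k + d + 1 = s + d * int k" "s + d * int k + d - 1 = s + d * int j"
        using k by simp_all
      then show ?thesis using next_cases no_backtrack prev(2) by metis
    qed
  qed
qed

lemma circuit_path_is_cyc_walk:
  assumes w: "is_path (set c) (circ_adj c) w" and long: "2 \<le> length w"
  obtains s d where "d = 1 \<or> d = -1" "w = cyc_walk s d (length w)"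
proof -
  have "w ! 0 \<in> set c" using w nth_mem[of 0 w] unfolding is_path_def by auto
  then obtain s where s: "w ! 0 = cyc s" using in_c_imp_cyc by blast
  have "Suc 0 < length w" using long by simp
  then have "circ_adj c (cyc s) (w ! 1)" using w s unfolding is_path_def by auto
  then obtain d where d: "d = 1 \<or> d = -1" and w_1: "w ! 1 = cyc (s + d)"
    using circ_adj_cyc_cases by (metis diff_conv_add_uminus)
  have "w = cyc_walk s d (length w)"
    using circuit_path_nth_eq_cyc[OF w s w_1 d] by (simp add: list_eq_iff_nth_eq)
  with d show ?thesis by (rule that)
qed

lemma straight_path_eq_cyc_walk:
  assumes d: "d = 1 \<or> d = -1" and k: "1 \<le> k" "k \<le> n - 1"
    and w: "s_path V adj k w" "straight opp w"
    and ends: "hd w = cyc t" "last w = cyc (t + d * int k)"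
  shows "w = cyc_walk t d (k + 1)"
proof -
  let ?q = "cyc_walk t d (k + 1)"
  have q: "is_path (set c) (circ_adj c) ?q" using cyc_walk_circuit_path d by simp
  have "?q \<noteq> []" by (simp add: cyc_walk_def)
  then have "hd ?q = hd w" "last ?q = last w"
    using ends by (simp_all add: hd_conv_nth last_conv_nth)
  then show ?thesis
    using straight_path_unique[OF k w circuit_path_imp_path[OF q] circuit_path_straight[OF q]]
    by simp
qed

lemma opp_cyc_neighbours:
  assumes "d = 1 \<or> d = -1"
  shows "opp (cyc s) (cyc (s + d)) (cyc (s - d))"
proof -
  have "straight opp (cyc_walk (s + d) (- d) 3)"
    using circuit_path_straight cyc_walk_circuit_path assms by (metis minus_minus zero_less_numeral)
  then show ?thesis unfolding straight_def by (auto dest: spec[of _ 1])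
qed

end

context veldkamp_polygon
begin

lemma opposite_at_start_imp_opposite_at_end:
  assumes x: "root V adj opp n x" and y: "root V adj opp n y"
    and start: "x ! 0 = y ! 0" and finish: "x ! n = y ! n"
    and opposite: "opp (x ! 0) (x ! 1) (y ! 1)"
  shows "opp (x ! n) (x ! (n - 1)) (y ! (n - 1))"
proof -
  have lengths: "length x = n + 1" "length y = n + 1"
    using x y by (simp_all add: root_def s_path_def)
  define p where "p = rev x @ [y ! 1]"
  have p: "s_path V adj (n + 1) p" "straight opp p"
    using root_snoc_opposite[OF x y start opposite] unfolding p_def .
  then obtain c where "closed_s_path V adj (2 * n) c" "straight_circuit opp c"
    and p_in_c: "lies_in p c"
    by (rule straight_path_in_circuit)
  then interpret straight_2n_circuit V adj opp n c by unfold_locales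
  have "is_path (set c) (circ_adj c) p"
    using p_in_c p(1) unfolding lies_in_def is_path_def s_path_def by auto
  then obtain s d where d: "d = 1 \<or> d = -1" and p_walk: "p = cyc_walk s d (n + 2)"
    by (rule circuit_path_is_cyc_walk) (use p(1) in \<open>auto simp: s_path_def\<close>)
  have "p ! 0 = x ! n" "p ! 1 = x ! (n - 1)" "p ! (n + 1) = y ! 1"
    using lengths n_ge_2 by (simp_all add: p_def nth_append rev_nth)
  then have x_end: "x ! n = cyc s" "x ! (n - 1) = cyc (s + d)"
    and y_1: "y ! 1 = cyc (s + d * int (n + 1))"
    unfolding p_walk by simp_all
  have "y ! n = cyc (s + d * int (n + 1) + d * int (n - 1))"
    using cyc_add_multiple[of s d] finish x_end n_ge_2 by (simp add: N_def algebra_simps of_nat_diff)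
  moreover have "s_path V adj (n - 1) (drop 1 y)" "straight opp (drop 1 y)"
    using y lengths n_ge_2 is_path_drop[of V adj y 1] straight_drop[of opp y 1]
    unfolding root_def s_path_def by auto
  ultimately have tail: "drop 1 y = cyc_walk (s + d * int (n + 1)) d n"
    using straight_path_eq_cyc_walk[OF d, of "n - 1" "drop 1 y"] y_1 lengths n_ge_2
    by (simp add: hd_drop_conv_nth last_drop last_conv_nth)
  have "y ! (n - 1) = cyc (s - d + int N * d)"
    using arg_cong[OF tail, of "\<lambda>w. w ! (n - 2)"] lengths n_ge_2
    by (simp add: N_def algebra_simps of_nat_diff Suc_diff_Suc numeral_2_eq_2)
  then show ?thesis
    using opp_cyc_neighbours[OF d] x_end cyc_add_multiple by simp
qed

end

theorem proposition2p16:
  fixes V :: "'a set" and adj :: "'a \<Rightarrow> 'a \<Rightarrow> bool" and opp :: "'a \<Rightarrow> 'a \<Rightarrow> 'a \<Rightarrow> bool"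
    and n :: nat and x y :: "'a list"
  assumes "veldkamp_ngon V adj opp n"
    and "n \<ge> 2"
    and "root V adj opp n x" and "root V adj opp n y"
    and "x ! 0 = y ! 0" and "x ! n = y ! n"
  shows "opp (x ! 0) (x ! 1) (y ! 1) \<longleftrightarrow> opp (x ! n) (x ! (n - 1)) (y ! (n - 1))"
proof -
  interpret veldkamp_polygon V adj opp n by (rule veldkamp_polygon.intro) fact
  have "length x = n + 1" "length y = n + 1"
    using assms(3,4) by (simp_all add: root_def s_path_def)
  then have reversed:
    "rev x ! 0 = x ! n" "rev y ! 0 = y ! n" "rev x ! n = x ! 0" "rev y ! n = y ! 0"
    "rev x ! 1 = x ! (n - 1)" "rev y ! 1 = y ! (n - 1)" "rev x ! (n - 1) = x ! 1" "rev y ! (n - 1) = y ! 1"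
    using assms(2) by (auto simp: rev_nth Suc_diff_Suc numeral_2_eq_2)
  show ?thesis
    using opposite_at_start_imp_opposite_at_end[OF assms(3-6)]
      opposite_at_start_imp_opposite_at_end[OF root_rev[OF assms(3)] root_rev[OF assms(4)]]
      assms(5,6)
    unfolding reversed by blast
qed

end
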